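(* In the setting described in the context, with $\alpha>0$, for every $\xi\in\mathcal{L}^*$ we have $$\limsup_{\eta\to\xi}\frac{|F_\psi(\xi)-F_\psi(\eta)|}{|\xi-\eta|^\alpha}=\infty.$$
   Context: Setting: $X\subset\mathbb{R}$ compact connected, $A=\{0,\dots,d\}$, $f_a:X\to\mathrm{Int}X$ differentiable contractions satisfying strong separation ($f_a(\mathrm{Int}X)\subset\mathrm{Int}X$, $f_a(X)\cap f_b(X)=\emptyset$ for $a\ne b$) and the Hölder condition ($C^{1+\epsilon}$ diffeomorphic extensions $\tilde f_a$ to an open interval $Y\supset X$ with $\tilde f_a(Y)\subset Y$); $f_0(X)$ is the leftmost and $f_1(X)$ the rightmost interval among the $f_a(X)$. Limit set $\mathcal{L}=\bigcap_n\bigcup_{\omega\in A^n}f_\omega(X)$, identified with $A^{\mathbb{N}}$ via the coding map; cylinders $[x_1\dots x_n]$; Birkhoff sums $S_ng=\sum_{k<n}g\circ\sigma^k$. $\phi(\xi)=\log|f'_{x_1}(\xi)|$. Pressure $P(g)=\lim_n\frac1n\log\sum_{\omega\in A^n}\exp(\sup_{[\omega]}S_ng)$. $\psi$ is Hölder continuous with $\psi<0$, $P(\psi)=0$, $\psi>\alpha\phi$; $\nu_\psi$ is its Gibbs measure ($\nu_\psi([\omega])\asymp e^{S_n\psi(\xi)}$ uniformly for $\xi\in[\omega]$, $\omega\in A^n$), and $F_\psi(x)=\nu_\psi((-\infty,x])$, $x\in\mathbb{R}$. $\mathcal{E}$ is the set of $(x_1x_2\dots)\in\mathcal{L}$ for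 which there are $i\in\{0,1\}$ and $n$ with $x_k=i$ for all $k\ge n$, and $\mathcal{L}^*=\mathcal{L}\setminus\mathcal{E}$. *)

theory Defs
  imports "HOL-Probability.Probability"
begin

text \<open>Sequences x = (x_1 x_2 ...) are represented as functions nat => nat with
  x_1 = x 0. Finite words are lists.\<close>

definition seqs :: "nat \<Rightarrow> (nat \<Rightarrow> nat) set" where
  "seqs d = {x. \<forall>k. x k \<le> d}"

definition words :: "nat \<Rightarrow> nat \<Rightarrow> nat list set" where
  "words d n = {w. length w = n \<and> (\<forall>a\<in>set w. a \<le> d)}"

definition cyl :: "nat \<Rightarrow> nat list \<Rightarrow> (nat \<Rightarrow> nat) set" where
  "cyl d w = {x \<in> seqs d. \<forall>i<length w. x i = w ! i}"

definition shift :: "(nat \<Rightarrow> nat) \<Rightarrow> (nat \<Rightarrow> nat)" where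
  "shift x = (\<lambda>i. x (Suc i))"

definition birkhoff :: "nat \<Rightarrow> ((nat \<Rightarrow> nat) \<Rightarrow> real) \<Rightarrow> (nat \<Rightarrow> nat) \<Rightarrow> real" where
  "birkhoff n g x = (\<Sum>k<n. g ((shift ^^ k) x))"

definition has_pressure :: "nat \<Rightarrow> ((nat \<Rightarrow> nat) \<Rightarrow> real) \<Rightarrow> real \<Rightarrow> bool" where
  "has_pressure d g p \<longleftrightarrow>
     (\<lambda>n. ln (\<Sum>w\<in>words d n. exp (SUP x\<in>cyl d w. birkhoff n g x)) / real n)
       \<longlonglongrightarrow> p"

text \<open>Hoelder continuity w.r.t. the standard metric on A^N.\<close>
definition holder_seq :: "nat \<Rightarrow> ((nat \<Rightarrow> nat) \<Rightarrow> real) \<Rightarrow> bool" where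
  "holder_seq d g \<longleftrightarrow> (\<exists>C \<theta>. 0 < \<theta> \<and> \<theta> < 1 \<and>
     (\<forall>x\<in>seqs d. \<forall>y\<in>seqs d. \<forall>n. (\<forall>i<n. x i = y i) \<longrightarrow> \<bar>g x - g y\<bar> \<le> C * \<theta> ^ n))"

definition comp_word :: "(nat \<Rightarrow> real \<Rightarrow> real) \<Rightarrow> nat list \<Rightarrow> real \<Rightarrow> real" where
  "comp_word f w = foldr (\<lambda>a g. f a \<circ> g) w id"

definition limit_set :: "(nat \<Rightarrow> real \<Rightarrow> real) \<Rightarrow> nat \<Rightarrow> real set \<Rightarrow> real set" where
  "limit_set f d X = (\<Inter>n. \<Union>w\<in>words d n. comp_word f w ` X)"

definition coding :: "(nat \<Rightarrow> real \<Rightarrow> real) \<Rightarrow> real set \<Rightarrow> (nat \<Rightarrow> nat) \<Rightarrow> real" where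
  "coding f X x = (THE y. \<forall>n. y \<in> comp_word f (map x [0..<n]) ` X)"

text \<open>phi(xi) = log |f'_{x_1}(sigma xi)|, the derivative of f_{x_1} taken at the point
  coded by sigma xi (so that pi xi = f_{x_1}(pi (sigma xi))).\<close>
definition phi :: "(nat \<Rightarrow> real \<Rightarrow> real) \<Rightarrow> real set \<Rightarrow> (nat \<Rightarrow> nat) \<Rightarrow> real" where
  "phi f X x = ln \<bar>deriv (f (x 0)) (coding f X (shift x))\<bar>"

definition ifs_setting :: "nat \<Rightarrow> real set \<Rightarrow> (nat \<Rightarrow> real \<Rightarrow> real) \<Rightarrow> bool" where
  "ifs_setting d X f \<longleftrightarrow>
     1 \<le> d \<and> compact X \<and> connected X \<and>
     \<comment> \<open>f_a : X -> Int X differentiable contractions\<close>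
     (\<forall>a\<le>d. f a ` X \<subseteq> interior X) \<and>
     (\<forall>a\<le>d. \<forall>x\<in>X. f a differentiable (at x within X)) \<and>
     (\<forall>a\<le>d. \<exists>c<1. \<forall>x\<in>X. \<forall>y\<in>X. \<bar>f a x - f a y\<bar> \<le> c * \<bar>x - y\<bar>) \<and>
     \<comment> \<open>strong separation\<close>
     (\<forall>a\<le>d. f a ` interior X \<subseteq> interior X) \<and>
     (\<forall>a\<le>d. \<forall>b\<le>d. a \<noteq> b \<longrightarrow> f a ` X \<inter> f b ` X = {}) \<and>
     \<comment> \<open>Hoelder condition: C^{1+eps} diffeomorphic extensions to an open interval Y\<close>
     (\<exists>p q \<epsilon>. p < q \<and> X \<subseteq> {p<..<q} \<and> 0 < \<epsilon> \<and> \<epsilon> \<le> 1 \<and>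
        (\<forall>a\<le>d. \<exists>g. (\<forall>x\<in>X. g x = f a x) \<and> g ` {p<..<q} \<subseteq> {p<..<q} \<and>
            inj_on g {p<..<q} \<and>
            (\<forall>y\<in>{p<..<q}. g differentiable (at y) \<and> deriv g y \<noteq> 0) \<and>
            (\<exists>C. \<forall>x\<in>{p<..<q}. \<forall>y\<in>{p<..<q}.
                 \<bar>deriv g x - deriv g y\<bar> \<le> C * \<bar>x - y\<bar> powr \<epsilon>))) \<and>
     \<comment> \<open>f_0(X) leftmost, f_1(X) rightmost\<close>
     (\<forall>a\<le>d. a \<noteq> 0 \<longrightarrow> (\<forall>u\<in>f 0 ` X. \<forall>v\<in>f a ` X. u < v)) \<and>
     (\<forall>a\<le>d. a \<noteq> 1 \<longrightarrow> (\<forall>u\<in>f a ` X. \<forall>v\<in>f 1 ` X. u < v))"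

definition gibbs_measure :: "nat \<Rightarrow> real set \<Rightarrow> (nat \<Rightarrow> real \<Rightarrow> real) \<Rightarrow>
    ((nat \<Rightarrow> nat) \<Rightarrow> real) \<Rightarrow> real measure \<Rightarrow> bool" where
  "gibbs_measure d X f \<psi> \<nu> \<longleftrightarrow>
     sets \<nu> = sets borel \<and> prob_space \<nu> \<and> emeasure \<nu> (limit_set f d X) = 1 \<and>
     (\<exists>C\<ge>1. \<forall>n. \<forall>w\<in>words d n. \<forall>x\<in>cyl d w.
        exp (birkhoff n \<psi> x) / C \<le> measure \<nu> (coding f X ` cyl d w) \<and>
        measure \<nu> (coding f X ` cyl d w) \<le> C * exp (birkhoff n \<psi> x))"

definition distr_fun :: "real measure \<Rightarrow> real \<Rightarrow> real" where
  "distr_fun \<nu> x = measure \<nu> {..x}"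

definition E_set :: "nat \<Rightarrow> (nat \<Rightarrow> nat) set" where
  "E_set d = {x \<in> seqs d. \<exists>i\<in>{0,1}. \<exists>n. \<forall>k\<ge>n. x k = i}"

definition L_star :: "(nat \<Rightarrow> real \<Rightarrow> real) \<Rightarrow> nat \<Rightarrow> real set \<Rightarrow> real set" where
  "L_star f d X = limit_set f d X - coding f X ` E_set d"

end

theory Submission
  imports Defs
begin

text \<open>For \<open>\<xi>\<close> in the limit set and every \<open>n\<close>, \<open>\<xi>\<close> lies in a basic interval
  \<open>J\<^sub>n = f\<^sub>y\<^sub>1 \<circ> \<dots> \<circ> f\<^sub>y\<^sub>n (X)\<close>. The Gibbs property gives \<open>\<nu>(J\<^sub>n) \<ge> exp (S\<^sub>n \<psi>) / C\<close>, and
  since the \<open>f\<^sub>a\<close> have Hoelder continuous derivatives bounded away from \<open>0\<close>, their distortion on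
  small intervals is arbitrarily close to \<open>1\<close>, so \<open>|J\<^sub>n| \<le> exp (c + S\<^sub>n \<phi> + n \<epsilon>)\<close> for any
  \<open>\<epsilon> > 0\<close>. By compactness of the code space \<open>\<psi> - \<alpha> \<phi> \<ge> \<gamma> > 0\<close>, hence
  \<open>\<nu>(J\<^sub>n) / |J\<^sub>n|\<^sup>\<alpha>\<close> grows like \<open>exp (n \<gamma> / 2)\<close>. One side of \<open>\<xi>\<close> within distance \<open>|J\<^sub>n|\<close>
  carries half of that mass, which produces points \<open>\<eta> \<rightarrow> \<xi>\<close> with unbounded Hoelder quotient.\<close>

definition diam_le :: "real set \<Rightarrow> real \<Rightarrow> bool" where
  "diam_le S D \<longleftrightarrow> (\<forall>u\<in>S. \<forall>v\<in>S. \<bar>u - v\<bar> \<le> D)"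

lemma diam_le_mono: "diam_le S D \<Longrightarrow> D \<le> D' \<Longrightarrow> diam_le S D'"
  unfolding diam_le_def by force

lemma diam_le_min: "diam_le S D \<Longrightarrow> diam_le S D' \<Longrightarrow> diam_le S (min D D')"
  unfolding diam_le_def by auto

lemma diam_le_subset_Icc: "diam_le S D \<Longrightarrow> x \<in> S \<Longrightarrow> S \<subseteq> {x - D..x + D}"
  unfolding diam_le_def by (force simp: abs_le_iff)

lemma ex_uniform_less:
  fixes P :: "nat \<Rightarrow> 'b::linorder \<Rightarrow> bool"
  assumes "\<forall>a\<le>d. \<exists>c<u. P a c"
    and mono: "\<And>a c c'. P a c \<Longrightarrow> c \<le> c' \<Longrightarrow> P a c'"
  shows "\<exists>c<u. \<forall>a\<le>d. P a c"
  using assms(1)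
proof (induction d)
  case 0 then show ?case by auto
next
  case (Suc d)
  then obtain c c' where "c < u" "\<forall>a\<le>d. P a c" "c' < u" "P (Suc d) c'"
    by (metis le_SucI order_refl)
  then show ?case
    by (intro exI[of _ "max c c'"]) (metis le_Suc_eq max.cobounded1 max.cobounded2 max_less_iff_conj mono)
qed

lemma ex_uniform_greater:
  fixes P :: "nat \<Rightarrow> 'b::linorder \<Rightarrow> bool"
  assumes "\<forall>a\<le>d. \<exists>c>u. P a c"
    and mono: "\<And>a c c'. P a c \<Longrightarrow> u < c' \<Longrightarrow> c' \<le> c \<Longrightarrow> P a c'"
  shows "\<exists>c>u. \<forall>a\<le>d. P a c"
  using assms(1)
proof (induction d)
  case 0 then show ?case by auto
next
  case (Suc d)
  then obtain c c' where "u < c" "\<forall>a\<le>d. P a c" "u < c'" "P (Suc d) c'"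
    by (metis le_SucI order_refl)
  then show ?case
    by (intro exI[of _ "min c c'"]) (metis le_Suc_eq min.cobounded1 min.cobounded2 min_less_iff_conj mono)
qed

lemma powr_le_if_small:
  fixes C e0 e :: real
  assumes "0 < e0" "0 < e"
  shows "\<exists>\<delta>>0. \<forall>z. 0 \<le> z \<longrightarrow> z \<le> \<delta> \<longrightarrow> C * z powr e0 \<le> e"
proof (intro exI[of _ "(e/(\<bar>C\<bar>+1)) powr (1/e0)"] conjI allI impI)
  show "0 < (e/(\<bar>C\<bar>+1)) powr (1/e0)" using assms by simp
  fix z :: real assume z: "0 \<le> z" "z \<le> (e/(\<bar>C\<bar>+1)) powr (1/e0)"
  have "z powr e0 \<le> ((e/(\<bar>C\<bar>+1)) powr (1/e0)) powr e0"
    using z assms by (intro powr_mono2) auto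
  also have "\<dots> = e/(\<bar>C\<bar>+1)" using assms by (simp add: powr_powr)
  finally have "z powr e0 \<le> e/(\<bar>C\<bar>+1)" .
  then have "\<bar>C\<bar> * z powr e0 \<le> \<bar>C\<bar> * (e/(\<bar>C\<bar>+1))" by (intro mult_left_mono) auto
  also have "\<dots> \<le> e" using assms by (simp add: field_simps)
  finally show "C * z powr e0 \<le> e" by (smt (verit) mult_right_mono powr_ge_zero)
qed

lemma holder_continuous_on:
  fixes h :: "real \<Rightarrow> real"
  assumes "0 < e0" and holder: "\<forall>s\<in>S. \<forall>t\<in>S. \<bar>h s - h t\<bar> \<le> C * \<bar>s - t\<bar> powr e0"
  shows "continuous_on S h"
  unfolding continuous_on_iff
proof (intro ballI allI impI)
  fix x e :: real assume x: "x \<in> S" and e: "0 < e"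
  obtain \<delta> where \<delta>: "\<delta> > 0" "\<forall>z. 0 \<le> z \<longrightarrow> z \<le> \<delta> \<longrightarrow> C * z powr e0 \<le> e/2"
    using powr_le_if_small[OF \<open>0 < e0\<close>, of "e/2" C] e by auto
  show "\<exists>d>0. \<forall>x'\<in>S. dist x' x < d \<longrightarrow> dist (h x') (h x) < e"
  proof (intro exI[of _ \<delta>] conjI ballI impI)
    fix x' assume x': "x' \<in> S" "dist x' x < \<delta>"
    have "\<bar>h x' - h x\<bar> \<le> C * \<bar>x' - x\<bar> powr e0" using holder x x' by blast
    also have "\<dots> \<le> e/2" using \<delta> x' by (auto simp: dist_real_def)
    finally show "dist (h x') (h x) < e" using e by (simp add: dist_real_def)
  qed (rule \<delta>(1))
qed

lemma abs_ln_diff_le: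
  fixes m u v :: real
  assumes "0 < m" "m \<le> u" "m \<le> v"
  shows "\<bar>ln u - ln v\<bar> \<le> \<bar>u - v\<bar> / m"
proof -
  have k: "ln a - ln b \<le> \<bar>a - b\<bar> / m" if "m \<le> a" "m \<le> b" for a b
  proof -
    have "ln a - ln b = ln (a / b)" using that assms by (simp add: ln_div)
    also have "\<dots> \<le> a / b - 1" using that assms by (intro ln_le_minus_one) auto
    also have "\<dots> = (a - b) / b" using that assms by (simp add: field_simps)
    also have "\<dots> \<le> \<bar>a - b\<bar> / b" using that assms by (intro divide_right_mono) auto
    also have "\<dots> \<le> \<bar>a - b\<bar> / m" using that assms by (intro divide_left_mono) auto
    finally show ?thesis .
  qed
  show ?thesis using k[of u v] k[of v u] assms by (auto simp: abs_minus_commute)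
qed

lemma Limsup_at_eq_infinityI:
  fixes g :: "'a::metric_space \<Rightarrow> real"
  assumes "\<And>M \<delta>. 0 < \<delta> \<Longrightarrow> \<exists>\<eta>. \<eta> \<noteq> \<xi> \<and> dist \<eta> \<xi> < \<delta> \<and> M \<le> g \<eta>"
  shows "Limsup (at \<xi>) (\<lambda>\<eta>. ereal (g \<eta>)) = \<infinity>"
proof (rule ereal_top)
  fix M :: real
  show "ereal M \<le> Limsup (at \<xi>) (\<lambda>\<eta>. ereal (g \<eta>))"
    unfolding Limsup_def
  proof (rule INF_greatest)
    fix P assume "P \<in> {P. eventually P (at \<xi>)}"
    then obtain \<delta> where \<delta>: "\<delta> > 0" "\<forall>x. x \<noteq> \<xi> \<and> dist x \<xi> < \<delta> \<longrightarrow> P x"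
      unfolding eventually_at by auto
    obtain \<eta> where "\<eta> \<noteq> \<xi>" "dist \<eta> \<xi> < \<delta>" "M \<le> g \<eta>" using assms \<delta>(1) by blast
    then show "ereal M \<le> (SUP x\<in>{x. P x}. ereal (g x))"
      by (intro SUP_upper2[of \<eta>]) (use \<delta> in auto)
  qed
qed

lemma distr_fun_diff:
  assumes "finite_measure \<nu>" "sets \<nu> = sets borel" "u \<le> v"
  shows "distr_fun \<nu> v - distr_fun \<nu> u = measure \<nu> {u<..v}"
proof -
  interpret finite_measure \<nu> by (rule assms(1))
  have "{..v} - {..u} = {u<..v}" by auto
  then show ?thesis
    using assms(2,3) finite_measure_Diff[of "{..v}" "{..u}"] by (simp add: distr_fun_def)
qed

text \<open>One of the two half-intervals around \<open>\<xi>\<close> carries half of the mass of \<open>[\<xi> - D, \<xi> + D]\<close>;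
  the jump of the distribution function across that half is witnessed at \<open>\<xi> + D\<close> or \<open>\<xi> - 2D\<close>.\<close>
lemma distr_fun_oscillation:
  assumes fin: "finite_measure \<nu>" and sets: "sets \<nu> = sets borel" and "0 < D"
  shows "\<exists>\<eta>. \<eta> \<noteq> \<xi> \<and> \<bar>\<eta> - \<xi>\<bar> \<le> 2 * D \<and>
           measure \<nu> {\<xi> - D..\<xi> + D} \<le> 2 * \<bar>distr_fun \<nu> \<eta> - distr_fun \<nu> \<xi>\<bar>"
proof -
  interpret finite_measure \<nu> by (rule fin)
  have split: "measure \<nu> {\<xi> - D..\<xi> + D} \<le> measure \<nu> {\<xi> - D..\<xi>} + measure \<nu> {\<xi><..\<xi> + D}"
  proof -
    have "{\<xi> - D..\<xi> + D} = {\<xi> - D..\<xi>} \<union> {\<xi><..\<xi> + D}" using \<open>0 < D\<close> by auto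
    then show ?thesis using sets by (simp add: measure_Un_le)
  qed
  show ?thesis
  proof (cases "measure \<nu> {\<xi> - D..\<xi>} \<le> measure \<nu> {\<xi><..\<xi> + D}")
    case True
    have "distr_fun \<nu> (\<xi> + D) - distr_fun \<nu> \<xi> = measure \<nu> {\<xi><..\<xi> + D}"
      using distr_fun_diff[OF fin sets] \<open>0 < D\<close> by simp
    then show ?thesis using True split \<open>0 < D\<close> by (intro exI[of _ "\<xi> + D"]) auto
  next
    case False
    have "distr_fun \<nu> \<xi> - distr_fun \<nu> (\<xi> - 2 * D) = measure \<nu> {\<xi> - 2 * D<..\<xi>}"
      using distr_fun_diff[OF fin sets] \<open>0 < D\<close> by simp
    moreover have "measure \<nu> {\<xi> - D..\<xi>} \<le> measure \<nu> {\<xi> - 2 * D<..\<xi>}"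
      using sets \<open>0 < D\<close> by (intro finite_measure_mono) auto
    ultimately show ?thesis using False split \<open>0 < D\<close>
      by (intro exI[of _ "\<xi> - 2 * D"]) (auto simp: abs_minus_commute)
  qed
qed

lemma ifs_setting_interval:
  assumes "ifs_setting d X f" and "x \<in> X"
  shows "\<exists>l r. X = {l..r} \<and> l < r"
proof -
  have "compact X" "connected X" "f 0 x \<in> interior X"
    using assms unfolding ifs_setting_def by auto
  moreover obtain l r where lr: "X = {l..r}"
    using connected_compact_interval_1 \<open>compact X\<close> \<open>connected X\<close> by blast
  ultimately have "l < r" by (cases "l < r") auto
  then show ?thesis using lr by blast
qed

lemma comp_word_Nil [simp]: "comp_word f [] = id"
  by (simp add: comp_word_def)

lemma comp_word_Cons [simp]: "comp_word f (a # w) = f a \<circ> comp_word f w"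
  by (simp add: comp_word_def)

lemma comp_word_append: "comp_word f (u @ v) = comp_word f u \<circ> comp_word f v"
  by (induction u) auto

lemma funpow_shift_apply: "(shift ^^ k) x i = x (k + i)"
  by (induction k arbitrary: i) (auto simp: shift_def)

lemma funpow_shift_seqs: "x \<in> seqs d \<Longrightarrow> (shift ^^ k) x \<in> seqs d"
  by (auto simp: seqs_def funpow_shift_apply)

lemma shift_seqs: "x \<in> seqs d \<Longrightarrow> shift x \<in> seqs d"
  by (auto simp: seqs_def shift_def)

lemma map_upt_Suc_shift: "map z [0..<Suc m] = z 0 # map (shift z) [0..<m]"
  by (induction m) (auto simp: shift_def)

lemma map_funpow_shift_upt: "map ((shift ^^ j) y) [0..<K] = map y [j..<j+K]"
proof -
  have "map ((shift ^^ j) y) [0..<K] = map (\<lambda>i. y (i + j)) [0..<K]"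
    by (auto simp: funpow_shift_apply add.commute)
  also have "\<dots> = map y (map (\<lambda>i. i + j) [0..<K])" by simp
  also have "\<dots> = map y [j..<j+K]" by (simp add: map_add_upt add.commute)
  finally show ?thesis .
qed

lemma map_upt_split: "m \<le> n \<Longrightarrow> map y [0..<n] = map y [0..<m] @ map y [m..<n]"
  by (metis map_append le0 upt_add_eq_append le_add_diff_inverse)

lemma set_map_seqs: "x \<in> seqs d \<Longrightarrow> set (map x [i..<j]) \<subseteq> {..d}"
  by (auto simp: seqs_def)

lemma birkhoff_lower_bound:
  assumes "y \<in> seqs d" "\<And>z. z \<in> seqs d \<Longrightarrow> c \<le> g z"
  shows "real n * c \<le> birkhoff n g y"
  using sum_bounded_below[of "{..<n}" c "\<lambda>k. g ((shift ^^ k) y)"] assms funpow_shift_seqs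
  by (simp add: birkhoff_def)

lemma birkhoff_diff_scaled:
  "birkhoff n (\<lambda>z. g z - a * h z) y = birkhoff n g y - a * birkhoff n h y"
  by (simp add: birkhoff_def sum_subtractf sum_distrib_left)

lemma compact_seqs: "compact (seqs d)"
proof -
  have "seqs d = PiE UNIV (\<lambda>_. {..d})" by (auto simp: seqs_def PiE_def extensional_def)
  moreover have "compactin (product_topology (\<lambda>i. euclidean) UNIV) (PiE UNIV (\<lambda>_::nat. {..d}))"
    by (simp add: compactin_PiE finite_imp_compact)
  ultimately show ?thesis by (simp add: euclidean_product_topology)
qed

lemma open_common_prefix: "open {y::nat \<Rightarrow> nat. \<forall>i<N. y i = x i}"
proof -
  have "{y::nat\<Rightarrow>nat. \<forall>i<N. y i = x i} = PiE UNIV (\<lambda>i. if i<N then {x i} else UNIV)"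
    by (auto simp: PiE_def extensional_def split: if_splits)
  then show ?thesis
    by (simp add: open_PiE discrete_topology_class.open_discrete)
qed

lemma continuous_on_seqsI:
  assumes "\<And>x e. x \<in> seqs d \<Longrightarrow> 0 < e \<Longrightarrow>
             \<exists>N. \<forall>y\<in>seqs d. (\<forall>i<N. y i = x i) \<longrightarrow> \<bar>h y - h x\<bar> < (e::real)"
  shows "continuous_on (seqs d) h"
  unfolding continuous_on_topological
proof (intro ballI allI impI)
  fix x B assume x: "x \<in> seqs d" and B: "open B" "h x \<in> B"
  obtain e where e: "e > 0" "\<forall>y. dist y (h x) < e \<longrightarrow> y \<in> B" using B unfolding open_dist by blast
  obtain N where N: "\<forall>y\<in>seqs d. (\<forall>i<N. y i = x i) \<longrightarrow> \<bar>h y - h x\<bar> < e" using assms x e by blast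
  show "\<exists>A. open A \<and> x \<in> A \<and> (\<forall>y\<in>seqs d. y \<in> A \<longrightarrow> h y \<in> B)"
  proof (intro exI[of _ "{y. \<forall>i<N. y i = x i}"] conjI ballI impI)
    fix y assume "y \<in> seqs d" "y \<in> {y. \<forall>i<N. y i = x i}"
    then show "h y \<in> B" using N e by (auto simp: dist_real_def)
  qed (auto simp: open_common_prefix)
qed

lemma holder_seq_continuous_on:
  assumes "holder_seq d \<psi>"
  shows "continuous_on (seqs d) \<psi>"
proof (rule continuous_on_seqsI)
  fix x and e :: real assume x: "x \<in> seqs d" and e: "0 < e"
  obtain C \<theta> where C: "0 < \<theta>" "\<theta> < 1"
    "\<forall>x\<in>seqs d. \<forall>y\<in>seqs d. \<forall>n. (\<forall>i<n. x i = y i) \<longrightarrow> \<bar>\<psi> x - \<psi> y\<bar> \<le> C * \<theta> ^ n"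
    using assms unfolding holder_seq_def by blast
  have "(\<lambda>n. C * \<theta> ^ n) \<longlonglongrightarrow> 0" using C by (intro tendsto_mult_right_zero LIMSEQ_power_zero) auto
  then have "\<forall>\<^sub>F n in sequentially. C * \<theta> ^ n < e" using e by (rule order_tendstoD(2))
  then obtain N where N: "C * \<theta> ^ N < e" by (auto simp: eventually_sequentially)
  show "\<exists>N. \<forall>y\<in>seqs d. (\<forall>i<N. y i = x i) \<longrightarrow> \<bar>\<psi> y - \<psi> x\<bar> < e"
  proof (intro exI[of _ N] ballI impI)
    fix y assume "y \<in> seqs d" "\<forall>i<N. y i = x i"
    then have "\<bar>\<psi> y - \<psi> x\<bar> \<le> C * \<theta> ^ N" using C(3) x by blast
    then show "\<bar>\<psi> y - \<psi> x\<bar> < e" using N by simp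
  qed
qed

locale ifs_interval =
  fixes d :: nat and X :: "real set" and f :: "nat \<Rightarrow> real \<Rightarrow> real" and l r :: real
  assumes setting: "ifs_setting d X f" and X_eq: "X = {l..r}" and l_less_r: "l < r"
begin

lemma f_image_subset: "a \<le> d \<Longrightarrow> f a ` X \<subseteq> {l<..<r}"
proof -
  have "\<forall>a\<le>d. f a ` X \<subseteq> interior X" using setting unfolding ifs_setting_def by (elim conjE)
  then show "a \<le> d \<Longrightarrow> f a ` X \<subseteq> {l<..<r}" using X_eq by simp
qed

lemma f_in_X: "a \<le> d \<Longrightarrow> x \<in> X \<Longrightarrow> f a x \<in> X"
  using f_image_subset X_eq by fastforce

lemma ex_contraction_factor:
  "\<exists>c. 0 < c \<and> c < 1 \<and> (\<forall>a\<le>d. \<forall>x\<in>X. \<forall>y\<in>X. \<bar>f a x - f a y\<bar> \<le> c * \<bar>x - y\<bar>)"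
proof -
  have "\<forall>a\<le>d. \<exists>c<1. \<forall>x\<in>X. \<forall>y\<in>X. \<bar>f a x - f a y\<bar> \<le> c * \<bar>x - y\<bar>"
    using setting unfolding ifs_setting_def by (elim conjE)
  moreover have mono: "\<forall>x\<in>X. \<forall>y\<in>X. \<bar>f a x - f a y\<bar> \<le> c' * \<bar>x - y\<bar>"
    if "\<forall>x\<in>X. \<forall>y\<in>X. \<bar>f a x - f a y\<bar> \<le> c * \<bar>x - y\<bar>" "c \<le> c'" for a c c'
    using that by (meson abs_ge_zero mult_right_mono order_trans)
  ultimately obtain c where c: "c < 1" "\<forall>a\<le>d. \<forall>x\<in>X. \<forall>y\<in>X. \<bar>f a x - f a y\<bar> \<le> c * \<bar>x - y\<bar>"
    using ex_uniform_less[where P="\<lambda>a c. \<forall>x\<in>X. \<forall>y\<in>X. \<bar>f a x - f a y\<bar> \<le> c * \<bar>x - y\<bar>"]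
    by blast
  have "\<bar>f a x - f a y\<bar> \<le> max c (1/2) * \<bar>x - y\<bar>" if "a \<le> d" "x \<in> X" "y \<in> X" for a x y
    using mono[of a c "max c (1/2)"] c(2) that by simp
  then show ?thesis using c(1) by (intro exI[of _ "max c (1/2)"]) auto
qed

definition lam :: real where
  "lam = (SOME c. 0 < c \<and> c < 1 \<and> (\<forall>a\<le>d. \<forall>x\<in>X. \<forall>y\<in>X. \<bar>f a x - f a y\<bar> \<le> c * \<bar>x - y\<bar>))"

lemma lam_pos: "0 < lam" and lam_less_1: "lam < 1"
  and f_contraction: "a \<le> d \<Longrightarrow> x \<in> X \<Longrightarrow> y \<in> X \<Longrightarrow> \<bar>f a x - f a y\<bar> \<le> lam * \<bar>x - y\<bar>"
  using someI_ex[OF ex_contraction_factor] unfolding lam_def[symmetric] by auto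

lemma lam_power_le_1: "lam ^ n \<le> 1"
  using lam_pos lam_less_1 by (simp add: power_le_one)

lemma lam_power_small: "0 < e \<Longrightarrow> \<exists>N. lam ^ N * (r - l) < e"
  using real_arch_pow_inv[of "e/(r-l)" lam] lam_pos lam_less_1 l_less_r
  by (auto simp: field_simps)

lemma comp_word_in_X: "set w \<subseteq> {..d} \<Longrightarrow> x \<in> X \<Longrightarrow> comp_word f w x \<in> X"
  by (induction w) (auto intro: f_in_X)

lemma comp_word_contraction:
  "set w \<subseteq> {..d} \<Longrightarrow> x \<in> X \<Longrightarrow> y \<in> X \<Longrightarrow>
    \<bar>comp_word f w x - comp_word f w y\<bar> \<le> lam ^ length w * \<bar>x - y\<bar>"
proof (induction w)
  case Nil then show ?case by simp
next
  case (Cons a w)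
  have "\<bar>comp_word f (a#w) x - comp_word f (a#w) y\<bar> \<le> lam * \<bar>comp_word f w x - comp_word f w y\<bar>"
    using Cons.prems by (auto intro!: f_contraction comp_word_in_X)
  also have "\<dots> \<le> lam * (lam ^ length w * \<bar>x - y\<bar>)"
    using Cons lam_pos by (intro mult_left_mono) auto
  finally show ?case by simp
qed

lemma continuous_on_comp_word: "set w \<subseteq> {..d} \<Longrightarrow> continuous_on X (comp_word f w)"
  unfolding continuous_on_iff
proof (intro ballI allI impI)
  fix x e assume w: "set w \<subseteq> {..d}" and x: "x \<in> X" and e: "(0::real) < e"
  show "\<exists>d>0. \<forall>x'\<in>X. dist x' x < d \<longrightarrow> dist (comp_word f w x') (comp_word f w x) < e"
  proof (intro exI[of _ e] conjI ballI impI)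
    fix x' assume "x' \<in> X" "dist x' x < e"
    then have "\<bar>comp_word f w x' - comp_word f w x\<bar> \<le> lam ^ length w * \<bar>x' - x\<bar>"
      using comp_word_contraction w x by auto
    also have "\<dots> \<le> \<bar>x' - x\<bar>" by (intro mult_left_le_one_le) (auto simp: lam_power_le_1 lam_pos less_imp_le)
    finally show "dist (comp_word f w x') (comp_word f w x) < e"
      using \<open>dist x' x < e\<close> by (simp add: dist_real_def)
  qed (rule e)
qed

lemma compact_comp_word_image: "set w \<subseteq> {..d} \<Longrightarrow> compact (comp_word f w ` X)"
  using continuous_on_comp_word X_eq by (intro compact_continuous_image) auto

lemma diam_le_comp_word_image:
  assumes "set w \<subseteq> {..d}" "Y \<subseteq> X" "diam_le Y D"
  shows "diam_le (comp_word f w ` Y) (lam ^ length w * D)"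
  unfolding diam_le_def
proof (intro ballI)
  fix u v assume "u \<in> comp_word f w ` Y" "v \<in> comp_word f w ` Y"
  then obtain x y where xy: "x \<in> Y" "y \<in> Y" "u = comp_word f w x" "v = comp_word f w y" by auto
  then have "\<bar>u - v\<bar> \<le> lam ^ length w * \<bar>x - y\<bar>" using comp_word_contraction assms by blast
  also have "\<dots> \<le> lam ^ length w * D"
    using xy assms(3) lam_pos by (intro mult_left_mono) (auto simp: diam_le_def less_imp_le)
  finally show "\<bar>u - v\<bar> \<le> lam ^ length w * D" .
qed

lemma diam_le_X: "diam_le X (r - l)"
  using X_eq by (auto simp: diam_le_def)

definition basic_set :: "(nat \<Rightarrow> nat) \<Rightarrow> nat \<Rightarrow> real set" where
  "basic_set x n = comp_word f (map x [0..<n]) ` X"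

lemma basic_set_antimono: "x \<in> seqs d \<Longrightarrow> m \<le> n \<Longrightarrow> basic_set x n \<subseteq> basic_set x m"
  unfolding basic_set_def
  by (auto simp: map_upt_split[of m n] comp_word_append intro!: imageI comp_word_in_X set_map_seqs)

lemma diam_le_basic_set: "x \<in> seqs d \<Longrightarrow> diam_le (basic_set x n) (lam ^ n * (r - l))"
  using diam_le_comp_word_image[OF set_map_seqs[of x d 0 n] _ diam_le_X]
  by (simp add: basic_set_def)

lemma basic_set_cong: "\<forall>i<n. y i = x i \<Longrightarrow> basic_set y n = basic_set x n"
  unfolding basic_set_def by (metis (mono_tags, lifting) atLeastLessThan_iff map_eq_conv set_upt)

lemma compact_basic_set: "x \<in> seqs d \<Longrightarrow> compact (basic_set x n)"
  unfolding basic_set_def by (intro compact_comp_word_image set_map_seqs)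

lemma Inter_basic_set_singleton:
  assumes x: "x \<in> seqs d"
  shows "\<exists>a. (\<Inter>n. basic_set x n) = {a}"
proof (rule decreasing_closed_nest_sing)
  show "closed (basic_set x n)" for n by (intro compact_imp_closed compact_basic_set x)
  show "basic_set x n \<noteq> {}" for n unfolding basic_set_def using X_eq l_less_r by auto
  show "m \<le> n \<Longrightarrow> basic_set x n \<subseteq> basic_set x m" for m n by (rule basic_set_antimono[OF x])
  fix e :: real assume "e > 0"
  then obtain n where n: "lam ^ n * (r - l) < e" using lam_power_small by blast
  show "\<exists>n. \<forall>u\<in>basic_set x n. \<forall>v\<in>basic_set x n. dist u v < e"
    using diam_le_basic_set[OF x, of n] n by (intro exI[of _ n]) (force simp: diam_le_def dist_real_def)
qed

lemma coding_eq_iff_in_basic_sets: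
  assumes "x \<in> seqs d"
  shows "coding f X x = y \<longleftrightarrow> (\<forall>n. y \<in> basic_set x n)"
proof -
  obtain a where a: "(\<Inter>n. basic_set x n) = {a}" using Inter_basic_set_singleton[OF assms] by auto
  then have "coding f X x = a"
    unfolding coding_def by (intro the_equality) (auto simp: basic_set_def)
  have "(\<forall>n. y \<in> basic_set x n) \<longleftrightarrow> y \<in> (\<Inter>n. basic_set x n)" by simp
  also have "\<dots> \<longleftrightarrow> y = a" using a by simp
  finally show ?thesis using \<open>coding f X x = a\<close> by auto
qed

lemma coding_in_basic_set: "x \<in> seqs d \<Longrightarrow> coding f X x \<in> basic_set x n"
  using coding_eq_iff_in_basic_sets by blast

lemma coding_in_X: "x \<in> seqs d \<Longrightarrow> coding f X x \<in> X"
  using coding_in_basic_set[of x 0] by (simp add: basic_set_def)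

lemma coding_shift: "x \<in> seqs d \<Longrightarrow> coding f X x = f (x 0) (coding f X (shift x))"
proof -
  assume x: "x \<in> seqs d"
  have "f (x 0) (coding f X (shift x)) \<in> basic_set x n" for n
  proof (cases n)
    case 0
    then show ?thesis using x coding_in_X[OF shift_seqs[OF x]] f_in_X
      by (auto simp: basic_set_def seqs_def)
  next
    case (Suc m)
    have "coding f X (shift x) \<in> basic_set (shift x) m" by (rule coding_in_basic_set[OF shift_seqs[OF x]])
    then show ?thesis unfolding Suc basic_set_def map_upt_Suc_shift by auto
  qed
  then show ?thesis using coding_eq_iff_in_basic_sets[OF x] by simp
qed

lemma coding_in_interior:
  assumes "x \<in> seqs d"
  shows "coding f X x \<in> {l<..<r}"
proof -
  have "x 0 \<le> d" using assms by (simp add: seqs_def)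
  then have "f (x 0) (coding f X (shift x)) \<in> {l<..<r}"
    using f_image_subset coding_in_X[OF shift_seqs[OF assms]] by blast
  then show ?thesis using coding_shift[OF assms] by simp
qed

lemma coding_funpow_shift: "z \<in> seqs d \<Longrightarrow>
   coding f X z = comp_word f (map z [0..<m]) (coding f X ((shift ^^ m) z))"
proof (induction m arbitrary: z)
  case 0 then show ?case by simp
next
  case (Suc m)
  have "coding f X z = f (z 0) (coding f X (shift z))" using coding_shift[OF Suc.prems] .
  also have "coding f X (shift z) = comp_word f (map (shift z) [0..<m]) (coding f X ((shift ^^ m) (shift z)))"
    using Suc.IH shift_seqs[OF Suc.prems] by blast
  finally show ?case by (simp add: map_upt_Suc_shift funpow_swap1 del: upt_Suc)
qed

lemma coding_close:
  assumes "x \<in> seqs d" "y \<in> seqs d" "\<forall>i<n. y i = x i"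
  shows "\<bar>coding f X y - coding f X x\<bar> \<le> lam ^ n * (r - l)"
proof -
  have "coding f X y \<in> basic_set x n"
    using coding_in_basic_set[OF assms(2), of n] basic_set_cong[OF assms(3)] by simp
  then show ?thesis
    using coding_in_basic_set[OF assms(1), of n] diam_le_basic_set[OF assms(1), of n]
    unfolding diam_le_def by blast
qed

lemma limit_set_in_basic_set:
  assumes "\<xi> \<in> limit_set f d X"
  shows "\<exists>y\<in>seqs d. \<xi> \<in> basic_set y n"
proof -
  obtain w where w: "w \<in> words d n" "\<xi> \<in> comp_word f w ` X"
    using assms unfolding limit_set_def by blast
  define y where "y = (\<lambda>i. if i < n then w ! i else 0)"
  have "y \<in> seqs d" using w(1) by (auto simp: seqs_def words_def y_def)
  moreover have "map y [0..<n] = w" using w(1) by (intro nth_equalityI) (auto simp: words_def y_def)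
  ultimately show ?thesis using w(2) by (auto simp: basic_set_def)
qed

lemma differentiable_extension:
  assumes "a \<le> d"
  obtains g C e0
  where "\<And>t. t \<in> {l<..<r} \<Longrightarrow> (f a has_real_derivative deriv g t) (at t)"
    and "\<And>t. t \<in> {l..r} \<Longrightarrow> deriv g t \<noteq> 0"
    and "\<And>s t. s \<in> {l..r} \<Longrightarrow> t \<in> {l..r} \<Longrightarrow> \<bar>deriv g s - deriv g t\<bar> \<le> C * \<bar>s - t\<bar> powr e0"
    and "0 < e0"
proof -
  have "\<exists>p q e0. p < q \<and> X \<subseteq> {p<..<q} \<and> 0 < e0 \<and> e0 \<le> 1 \<and>
        (\<forall>a\<le>d. \<exists>g. (\<forall>x\<in>X. g x = f a x) \<and> g ` {p<..<q} \<subseteq> {p<..<q} \<and>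
            inj_on g {p<..<q} \<and>
            (\<forall>y\<in>{p<..<q}. g differentiable (at y) \<and> deriv g y \<noteq> 0) \<and>
            (\<exists>C. \<forall>x\<in>{p<..<q}. \<forall>y\<in>{p<..<q}. \<bar>deriv g x - deriv g y\<bar> \<le> C * \<bar>x - y\<bar> powr e0))"
    using setting unfolding ifs_setting_def by (elim conjE)
  then obtain p q e0 where pq: "X \<subseteq> {p<..<q}" "0 < e0"
    and ext: "\<forall>a\<le>d. \<exists>g. (\<forall>x\<in>X. g x = f a x) \<and> g ` {p<..<q} \<subseteq> {p<..<q} \<and>
            inj_on g {p<..<q} \<and>
            (\<forall>y\<in>{p<..<q}. g differentiable (at y) \<and> deriv g y \<noteq> 0) \<and>
            (\<exists>C. \<forall>x\<in>{p<..<q}. \<forall>y\<in>{p<..<q}. \<bar>deriv g x - deriv g y\<bar> \<le> C * \<bar>x - y\<bar> powr e0)"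
    by blast
  from ext assms obtain g C where g: "\<forall>x\<in>X. g x = f a x"
      "\<forall>y\<in>{p<..<q}. g differentiable (at y) \<and> deriv g y \<noteq> 0"
      "\<forall>x\<in>{p<..<q}. \<forall>y\<in>{p<..<q}. \<bar>deriv g x - deriv g y\<bar> \<le> C * \<bar>x - y\<bar> powr e0"
    by blast
  have lr_pq: "{l..r} \<subseteq> {p<..<q}" using pq X_eq by simp
  show ?thesis
  proof
    fix t assume t: "t \<in> {l<..<r}"
    then have "t \<in> {l..r}" by simp
    then have "t \<in> {p<..<q}" using lr_pq by blast
    then have "g differentiable (at t)" using g(2) by blast
    then have "(g has_real_derivative deriv g t) (at t)"
      by (simp add: DERIV_deriv_iff_real_differentiable)
    then show "(f a has_real_derivative deriv g t) (at t)"
      by (rule has_field_derivative_transform_within_open[of _ _ _ "{l<..<r}"])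
         (use t g(1) X_eq in auto)
  next
    show "deriv g t \<noteq> 0" if "t \<in> {l..r}" for t using that g(2) lr_pq by blast
  next
    show "\<bar>deriv g s - deriv g t\<bar> \<le> C * \<bar>s - t\<bar> powr e0" if "s \<in> {l..r}" "t \<in> {l..r}" for s t
      using that g(3) lr_pq by blast
  next
    show "0 < e0" by (rule pq(2))
  qed
qed

lemma deriv_bounded_below_holder:
  assumes "a \<le> d"
  shows "\<exists>m>0. \<exists>C e0. 0 < e0 \<and>
     (\<forall>t\<in>{l<..<r}. (f a has_real_derivative deriv (f a) t) (at t) \<and> m \<le> \<bar>deriv (f a) t\<bar>) \<and>
     (\<forall>s\<in>{l<..<r}. \<forall>t\<in>{l<..<r}. \<bar>deriv (f a) s - deriv (f a) t\<bar> \<le> C * \<bar>s - t\<bar> powr e0)"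
proof -
  obtain g C e0
    where has_deriv: "\<And>t. t \<in> {l<..<r} \<Longrightarrow> (f a has_real_derivative deriv g t) (at t)"
    and nonzero: "\<And>t. t \<in> {l..r} \<Longrightarrow> deriv g t \<noteq> 0"
    and holder: "\<And>s t. s \<in> {l..r} \<Longrightarrow> t \<in> {l..r} \<Longrightarrow> \<bar>deriv g s - deriv g t\<bar> \<le> C * \<bar>s - t\<bar> powr e0"
    and e0: "0 < e0"
    using differentiable_extension[OF assms] by metis
  have deriv_eq: "deriv (f a) t = deriv g t" if "t \<in> {l<..<r}" for t
    using DERIV_imp_deriv[OF has_deriv[OF that]] .
  have "\<forall>s\<in>{l..r}. \<forall>t\<in>{l..r}. \<bar>deriv g s - deriv g t\<bar> \<le> C * \<bar>s - t\<bar> powr e0"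
    using holder by blast
  then have "continuous_on {l..r} (deriv g)" by (rule holder_continuous_on[OF e0])
  then have "continuous_on {l..r} (\<lambda>t. \<bar>deriv g t\<bar>)" by (rule continuous_on_rabs)
  then obtain t0 where t0: "t0 \<in> {l..r}" "\<forall>t\<in>{l..r}. \<bar>deriv g t0\<bar> \<le> \<bar>deriv g t\<bar>"
    using continuous_attains_inf[OF compact_Icc, of l r "\<lambda>t. \<bar>deriv g t\<bar>"] l_less_r by auto
  have "\<forall>t\<in>{l<..<r}. (f a has_real_derivative deriv (f a) t) (at t) \<and> \<bar>deriv g t0\<bar> \<le> \<bar>deriv (f a) t\<bar>"
    using has_deriv deriv_eq t0(2) by simp
  moreover have "\<forall>s\<in>{l<..<r}. \<forall>t\<in>{l<..<r}. \<bar>deriv (f a) s - deriv (f a) t\<bar> \<le> C * \<bar>s - t\<bar> powr e0"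
    using holder deriv_eq by simp
  moreover have "0 < \<bar>deriv g t0\<bar>" using nonzero[OF t0(1)] by simp
  ultimately show ?thesis using e0 by blast
qed

lemma deriv_bounded_below: "\<exists>m>0. \<forall>a\<le>d. \<forall>t\<in>{l<..<r}. m \<le> \<bar>deriv (f a) t\<bar>"
  using deriv_bounded_below_holder
  by (intro ex_uniform_greater[where P="\<lambda>a m. \<forall>t\<in>{l<..<r}. m \<le> \<bar>deriv (f a) t\<bar>"]) force+

text \<open>Hoelder continuity of \<open>f\<^sub>a'\<close> together with \<open>|f\<^sub>a'| \<ge> m > 0\<close> makes \<open>|f\<^sub>a'|\<close> vary by at most a factor
  \<open>1 + \<epsilon> \<le> exp \<epsilon>\<close> on small intervals; the mean value theorem does the rest.\<close>
lemma f_local_lipschitz_single: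
  assumes a: "a \<le> d" and e: "0 < \<epsilon>"
  shows "\<exists>\<delta>>0. \<forall>t\<in>{l<..<r}. \<forall>u\<in>X. \<forall>v\<in>X. \<bar>u - t\<bar> \<le> \<delta> \<longrightarrow> \<bar>v - t\<bar> \<le> \<delta> \<longrightarrow>
            \<bar>f a u - f a v\<bar> \<le> exp \<epsilon> * \<bar>deriv (f a) t\<bar> * \<bar>u - v\<bar>"
proof -
  obtain m C e0 where m: "m > 0" "0 < e0"
    "\<forall>t\<in>{l<..<r}. (f a has_real_derivative deriv (f a) t) (at t) \<and> m \<le> \<bar>deriv (f a) t\<bar>"
    "\<forall>s\<in>{l<..<r}. \<forall>t\<in>{l<..<r}. \<bar>deriv (f a) s - deriv (f a) t\<bar> \<le> C * \<bar>s - t\<bar> powr e0"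
    using deriv_bounded_below_holder[OF a] by blast
  obtain \<delta> where \<delta>: "\<delta> > 0" "\<forall>z. 0 \<le> z \<longrightarrow> z \<le> \<delta> \<longrightarrow> C * z powr e0 \<le> \<epsilon> * m"
    using powr_le_if_small[OF m(2), of "\<epsilon> * m" C] e m by auto
  have key: "\<bar>f a u - f a v\<bar> \<le> exp \<epsilon> * \<bar>deriv (f a) t\<bar> * \<bar>u - v\<bar>"
    if t: "t \<in> {l<..<r}" and u: "u \<in> X" and v: "v \<in> X" and uv: "u < v"
      and ut: "\<bar>u - t\<bar> \<le> \<delta>" and vt: "\<bar>v - t\<bar> \<le> \<delta>" for t u v
  proof -
    have "{u..v} \<subseteq> X" using u v X_eq by auto
    then have "continuous_on {u..v} (f a)"
      using continuous_on_comp_word[of "[a]"] a by (auto intro: continuous_on_subset)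
    moreover have "f a differentiable (at z)" if "u < z" "z < v" for z
      using that u v X_eq m(3) real_differentiable_def by fastforce
    ultimately obtain L z where z: "u < z" "z < v" "(f a has_real_derivative L) (at z)"
        "f a v - f a u = (v - u) * L"
      using MVT[OF uv] by blast
    have zi: "z \<in> {l<..<r}" using z u v X_eq by auto
    have L: "L = deriv (f a) z" using z(3) m(3) zi DERIV_unique by blast
    have "\<bar>z - t\<bar> \<le> \<delta>" using z ut vt by auto
    then have "\<bar>L - deriv (f a) t\<bar> \<le> \<epsilon> * m"
      using m(4) zi t \<delta>(2) L by (meson abs_ge_zero order_trans)
    also have "\<dots> \<le> \<epsilon> * \<bar>deriv (f a) t\<bar>" using m(3) t e by (intro mult_left_mono) auto
    finally have "\<bar>L\<bar> \<le> (1 + \<epsilon>) * \<bar>deriv (f a) t\<bar>" by (simp add: algebra_simps)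
    also have "\<dots> \<le> exp \<epsilon> * \<bar>deriv (f a) t\<bar>" by (intro mult_right_mono) auto
    finally have "\<bar>u - v\<bar> * \<bar>L\<bar> \<le> \<bar>u - v\<bar> * (exp \<epsilon> * \<bar>deriv (f a) t\<bar>)" by (intro mult_left_mono) auto
    moreover have "f a u - f a v = (u - v) * L" using z(4) by (simp add: algebra_simps)
    then have "\<bar>f a u - f a v\<bar> = \<bar>u - v\<bar> * \<bar>L\<bar>" by (simp add: abs_mult)
    ultimately show ?thesis by (simp add: mult_ac)
  qed
  have "\<bar>f a u - f a v\<bar> \<le> exp \<epsilon> * \<bar>deriv (f a) t\<bar> * \<bar>u - v\<bar>"
    if "t \<in> {l<..<r}" "u \<in> X" "v \<in> X" "\<bar>u - t\<bar> \<le> \<delta>" "\<bar>v - t\<bar> \<le> \<delta>" for t u v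
    using key[of t u v] key[of t v u] that by (cases u v rule: linorder_cases) (auto simp: abs_minus_commute)
  then show ?thesis using \<delta>(1) by blast
qed

lemma f_local_lipschitz:
  assumes "0 < \<epsilon>"
  shows "\<exists>\<delta>>0. \<forall>a\<le>d. \<forall>t\<in>{l<..<r}. \<forall>u\<in>X. \<forall>v\<in>X. \<bar>u - t\<bar> \<le> \<delta> \<longrightarrow> \<bar>v - t\<bar> \<le> \<delta> \<longrightarrow>
            \<bar>f a u - f a v\<bar> \<le> exp \<epsilon> * \<bar>deriv (f a) t\<bar> * \<bar>u - v\<bar>"
  using f_local_lipschitz_single[OF _ assms]
  by (intro ex_uniform_greater) (blast, smt (verit))

lemma exp_phi:
  assumes "z \<in> seqs d"
  shows "exp (phi f X z) = \<bar>deriv (f (z 0)) (coding f X (shift z))\<bar>"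
proof -
  obtain m where "m > 0" "\<forall>a\<le>d. \<forall>t\<in>{l<..<r}. m \<le> \<bar>deriv (f a) t\<bar>"
    using deriv_bounded_below by blast
  moreover have "z 0 \<le> d" using assms by (simp add: seqs_def)
  ultimately have "deriv (f (z 0)) (coding f X (shift z)) \<noteq> 0"
    using coding_in_interior[OF shift_seqs[OF assms]] by force
  then show ?thesis by (simp add: phi_def)
qed

lemma phi_bounded_below: "\<exists>m>0. \<forall>z\<in>seqs d. ln m \<le> phi f X z"
proof -
  obtain m where m: "m > 0" "\<forall>a\<le>d. \<forall>t\<in>{l<..<r}. m \<le> \<bar>deriv (f a) t\<bar>"
    using deriv_bounded_below by blast
  have "ln m \<le> phi f X z" if z: "z \<in> seqs d" for z
  proof -
    have "m \<le> \<bar>deriv (f (z 0)) (coding f X (shift z))\<bar>"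
      using m(2) z coding_in_interior[OF shift_seqs[OF z]] by (auto simp: seqs_def)
    then show ?thesis using m(1) by (simp add: phi_def)
  qed
  then show ?thesis using m(1) by blast
qed

lemma continuous_on_phi: "continuous_on (seqs d) (phi f X)"
proof (rule continuous_on_seqsI)
  fix x and e :: real assume x: "x \<in> seqs d" and e: "0 < e"
  define a where "a = x 0"
  have a: "a \<le> d" using x by (auto simp: seqs_def a_def)
  obtain m C e0 where m: "m > 0" "0 < e0"
    "\<forall>t\<in>{l<..<r}. (f a has_real_derivative deriv (f a) t) (at t) \<and> m \<le> \<bar>deriv (f a) t\<bar>"
    "\<forall>s\<in>{l<..<r}. \<forall>t\<in>{l<..<r}. \<bar>deriv (f a) s - deriv (f a) t\<bar> \<le> C * \<bar>s - t\<bar> powr e0"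
    using deriv_bounded_below_holder[OF a] by blast
  obtain \<delta> where \<delta>: "\<delta> > 0" "\<forall>z. 0 \<le> z \<longrightarrow> z \<le> \<delta> \<longrightarrow> C * z powr e0 \<le> e * m / 2"
    using powr_le_if_small[OF m(2), of "e * m / 2" C] e m by auto
  obtain N where N: "lam ^ N * (r - l) < \<delta>" using lam_power_small \<delta> by blast
  show "\<exists>N. \<forall>y\<in>seqs d. (\<forall>i<N. y i = x i) \<longrightarrow> \<bar>phi f X y - phi f X x\<bar> < e"
  proof (intro exI[of _ "Suc N"] ballI impI)
    fix y assume y: "y \<in> seqs d" and agree: "\<forall>i<Suc N. y i = x i"
    define s where "s = coding f X (shift y)"
    define t where "t = coding f X (shift x)"
    have s: "s \<in> {l<..<r}" and t: "t \<in> {l<..<r}"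
      unfolding s_def t_def by (intro coding_in_interior shift_seqs y x)+
    have "\<bar>s - t\<bar> \<le> lam ^ N * (r - l)"
      unfolding s_def t_def using agree by (intro coding_close shift_seqs x y) (auto simp: shift_def)
    then have "\<bar>deriv (f a) s - deriv (f a) t\<bar> \<le> e * m / 2"
      using m(4) s t \<delta>(2) N by (smt (verit) abs_ge_zero)
    then have "\<bar>\<bar>deriv (f a) s\<bar> - \<bar>deriv (f a) t\<bar>\<bar> \<le> e * m / 2"
      using abs_triangle_ineq3 order_trans by blast
    then have "\<bar>\<bar>deriv (f a) s\<bar> - \<bar>deriv (f a) t\<bar>\<bar> / m \<le> (e * m / 2) / m"
      using m(1) by (intro divide_right_mono) auto
    moreover have "\<bar>ln \<bar>deriv (f a) s\<bar> - ln \<bar>deriv (f a) t\<bar>\<bar> \<le> \<bar>\<bar>deriv (f a) s\<bar> - \<bar>deriv (f a) t\<bar>\<bar> / m"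
      using m(1) m(3) s t by (intro abs_ln_diff_le) auto
    moreover have "(e * m / 2) / m < e" using m(1) e by simp
    ultimately have "\<bar>ln \<bar>deriv (f a) s\<bar> - ln \<bar>deriv (f a) t\<bar>\<bar> < e" by linarith
    moreover have "y 0 = a" using agree a_def by auto
    ultimately show "\<bar>phi f X y - phi f X x\<bar> < e"
      unfolding phi_def a_def s_def t_def by simp
  qed
qed

lemma ex_uniform_gap:
  assumes "holder_seq d \<psi>" and "\<forall>x\<in>seqs d. \<psi> x > \<alpha> * phi f X x"
  shows "\<exists>\<gamma>>0. \<forall>z\<in>seqs d. \<gamma> \<le> \<psi> z - \<alpha> * phi f X z"
proof -
  have "continuous_on (seqs d) (\<lambda>z. \<psi> z - \<alpha> * phi f X z)"
    by (intro continuous_on_diff continuous_on_mult continuous_on_const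
        holder_seq_continuous_on[OF assms(1)] continuous_on_phi)
  moreover have "seqs d \<noteq> {}" by (auto simp: seqs_def intro!: exI[of _ "\<lambda>_. 0"])
  ultimately obtain z0 where "z0 \<in> seqs d" "\<forall>z\<in>seqs d. \<psi> z0 - \<alpha> * phi f X z0 \<le> \<psi> z - \<alpha> * phi f X z"
    using continuous_attains_inf[OF compact_seqs] by blast
  then show ?thesis using assms(2) by (intro exI[of _ "\<psi> z0 - \<alpha> * phi f X z0"]) auto
qed

lemma diam_le_comp_word_image_distortion:
  assumes \<delta>: "\<forall>a\<le>d. \<forall>t\<in>{l<..<r}. \<forall>u\<in>X. \<forall>v\<in>X. \<bar>u - t\<bar> \<le> \<delta> \<longrightarrow> \<bar>v - t\<bar> \<le> \<delta> \<longrightarrow>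
            \<bar>f a u - f a v\<bar> \<le> exp \<epsilon> * \<bar>deriv (f a) t\<bar> * \<bar>u - v\<bar>"
  shows "y \<in> seqs d \<Longrightarrow> Y \<subseteq> X \<Longrightarrow> diam_le Y D \<Longrightarrow> D \<le> \<delta> \<Longrightarrow> coding f X ((shift ^^ m) y) \<in> Y \<Longrightarrow>
    diam_le (comp_word f (map y [0..<m]) ` Y) (D * exp (\<Sum>k<m. phi f X ((shift ^^ k) y) + \<epsilon>))"
proof (induction m arbitrary: y)
  case 0 then show ?case by simp
next
  case (Suc m)
  define y' where "y' = shift y"
  have y': "y' \<in> seqs d" using shift_seqs[OF Suc.prems(1)] y'_def by simp
  have D0: "0 \<le> D" using Suc.prems(3,5) unfolding diam_le_def by force
  have funpow_y': "(shift ^^ m) y' = (shift ^^ Suc m) y" unfolding y'_def by (simp add: funpow_swap1)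
  define S where "S = comp_word f (map y' [0..<m]) ` Y"
  define E where "E = exp (\<Sum>k<m. phi f X ((shift ^^ k) y') + \<epsilon>)"
  have IH: "diam_le S (D * E)"
    unfolding S_def E_def using Suc.IH[OF y' Suc.prems(2,3,4)] Suc.prems(5) funpow_y' by simp
  have S_X: "S \<subseteq> X" unfolding S_def using Suc.prems(2) comp_word_in_X[OF set_map_seqs[OF y']] by blast
  have S_D: "diam_le S D"
  proof (rule diam_le_mono)
    show "diam_le S (lam ^ length (map y' [0..<m]) * D)"
      unfolding S_def by (rule diam_le_comp_word_image[OF set_map_seqs[OF y'] Suc.prems(2,3)])
    show "lam ^ length (map y' [0..<m]) * D \<le> D"
      using D0 lam_power_le_1 by (simp add: mult_left_le_one_le lam_pos less_imp_le)
  qed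
  define t where "t = coding f X y'"
  have t_S: "t \<in> S"
    unfolding t_def S_def using coding_funpow_shift[OF y', of m] Suc.prems(5) funpow_y' by simp
  have t: "t \<in> {l<..<r}" unfolding t_def by (rule coding_in_interior[OF y'])
  have a: "y 0 \<le> d" using Suc.prems(1) by (auto simp: seqs_def)
  have exp_phi_y: "exp (phi f X y) = \<bar>deriv (f (y 0)) t\<bar>"
    unfolding t_def y'_def by (rule exp_phi[OF Suc.prems(1)])
  have image: "comp_word f (map y [0..<Suc m]) ` Y = f (y 0) ` S"
    unfolding S_def y'_def map_upt_Suc_shift comp_word_Cons image_comp ..
  have sum: "(\<Sum>k<Suc m. phi f X ((shift ^^ k) y) + \<epsilon>) =
      (phi f X y + \<epsilon>) + (\<Sum>k<m. phi f X ((shift ^^ k) y') + \<epsilon>)"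
    unfolding sum.lessThan_Suc_shift y'_def by (simp add: funpow_swap1)
  show ?case
    unfolding image diam_le_def
  proof (intro ballI)
    fix u' v' assume "u' \<in> f (y 0) ` S" "v' \<in> f (y 0) ` S"
    then obtain u v where uv: "u \<in> S" "v \<in> S" "u' = f (y 0) u" "v' = f (y 0) v" by auto
    have "\<bar>u - t\<bar> \<le> \<delta>" "\<bar>v - t\<bar> \<le> \<delta>" using S_D uv t_S Suc.prems(4) unfolding diam_le_def by force+
    then have "\<bar>u' - v'\<bar> \<le> exp \<epsilon> * \<bar>deriv (f (y 0)) t\<bar> * \<bar>u - v\<bar>"
      using \<delta> a t uv S_X by blast
    also have "\<dots> \<le> exp \<epsilon> * \<bar>deriv (f (y 0)) t\<bar> * (D * E)"
      using IH uv unfolding diam_le_def by (intro mult_left_mono) auto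
    also have "\<dots> = D * exp (\<Sum>k<Suc m. phi f X ((shift ^^ k) y) + \<epsilon>)"
      unfolding sum E_def exp_phi_y[symmetric] by (simp add: exp_add mult_ac)
    finally show "\<bar>u' - v'\<bar> \<le> D * exp (\<Sum>k<Suc m. phi f X ((shift ^^ k) y) + \<epsilon>)" .
  qed
qed

text \<open>The last \<open>K\<close> maps shrink \<open>X\<close> below the scale \<open>\<delta>\<close> on which the distortion estimate applies;
  their derivatives are bounded below, so they cost only a constant in the exponent.\<close>
lemma diam_le_basic_set_exp_birkhoff:
  assumes "0 < \<epsilon>"
  shows "\<exists>K c. \<forall>y\<in>seqs d. \<forall>n\<ge>K.
           diam_le (basic_set y n) (exp (c + birkhoff n (phi f X) y + real n * \<epsilon>))"
proof -
  obtain \<delta> where \<delta>: "\<delta> > 0" "\<forall>a\<le>d. \<forall>t\<in>{l<..<r}. \<forall>u\<in>X. \<forall>v\<in>X. \<bar>u - t\<bar> \<le> \<delta> \<longrightarrow> \<bar>v - t\<bar> \<le> \<delta> \<longrightarrow>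
            \<bar>f a u - f a v\<bar> \<le> exp \<epsilon> * \<bar>deriv (f a) t\<bar> * \<bar>u - v\<bar>"
    using f_local_lipschitz[OF assms] by blast
  obtain m0 where m0: "m0 > 0" "\<forall>z\<in>seqs d. ln m0 \<le> phi f X z" using phi_bounded_below by blast
  obtain K where K: "lam ^ K * (r - l) < \<delta>" using lam_power_small \<delta>(1) by blast
  define \<delta>' where "\<delta>' = lam ^ K * (r - l)"
  have "\<delta>' > 0" unfolding \<delta>'_def using lam_pos l_less_r by simp
  have "diam_le (basic_set y n) (exp (ln \<delta>' - real K * ln m0 + birkhoff n (phi f X) y + real n * \<epsilon>))"
    if y: "y \<in> seqs d" and Kn: "K \<le> n" for y n
  proof -
    define Y where "Y = comp_word f (map y [n-K..<n]) ` X"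
    have "basic_set y n = comp_word f (map y [0..<n-K]) ` Y"
      unfolding basic_set_def Y_def map_upt_split[of "n-K" n y, OF diff_le_self]
        comp_word_append image_comp ..
    moreover have "Y \<subseteq> X" unfolding Y_def using comp_word_in_X[OF set_map_seqs[OF y]] by blast
    moreover have "diam_le Y \<delta>'"
      using diam_le_comp_word_image[OF set_map_seqs[OF y] _ diam_le_X, of "n-K" n] Kn
      unfolding Y_def \<delta>'_def by simp
    moreover have "coding f X ((shift ^^ (n-K)) y) \<in> Y"
    proof -
      have z: "(shift ^^ (n-K)) y \<in> seqs d" by (rule funpow_shift_seqs[OF y])
      have "map ((shift ^^ (n-K)) y) [0..<K] = map y [n-K..<n]"
        unfolding map_funpow_shift_upt using Kn by simp
      then show ?thesis
        using coding_funpow_shift[OF z, of K] coding_in_X[OF funpow_shift_seqs[OF z]]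
        unfolding Y_def by simp
    qed
    ultimately have diam: "diam_le (basic_set y n) (\<delta>' * exp (\<Sum>k<n-K. phi f X ((shift ^^ k) y) + \<epsilon>))"
      using diam_le_comp_word_image_distortion[OF \<delta>(2) y] K unfolding \<delta>'_def by simp
    have sum_bound: "(\<Sum>k<n-K. phi f X ((shift ^^ k) y) + \<epsilon>)
        \<le> birkhoff n (phi f X) y - real K * ln m0 + real n * \<epsilon>"
    proof -
      have "birkhoff n (phi f X) y = (\<Sum>k<n-K. phi f X ((shift ^^ k) y)) + (\<Sum>k\<in>{n-K..<n}. phi f X ((shift ^^ k) y))"
        unfolding birkhoff_def lessThan_atLeast0 using Kn by (simp add: sum.atLeastLessThan_concat)
      moreover have "real (card {n-K..<n}) * ln m0 \<le> (\<Sum>k\<in>{n-K..<n}. phi f X ((shift ^^ k) y))"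
        by (rule sum_bounded_below) (use m0 funpow_shift_seqs[OF y] in blast)
      moreover have "real (n-K) * \<epsilon> \<le> real n * \<epsilon>" using assms by (intro mult_right_mono) auto
      ultimately show ?thesis using Kn by (simp add: sum.distrib)
    qed
    have "\<delta>' * exp (\<Sum>k<n-K. phi f X ((shift ^^ k) y) + \<epsilon>) = exp (ln \<delta>' + (\<Sum>k<n-K. phi f X ((shift ^^ k) y) + \<epsilon>))"
      using \<open>\<delta>' > 0\<close> by (simp add: exp_add)
    also have "\<dots> \<le> exp (ln \<delta>' - real K * ln m0 + birkhoff n (phi f X) y + real n * \<epsilon>)"
      using sum_bound by simp
    finally show ?thesis using diam diam_le_mono by blast
  qed
  then show ?thesis by blast
qed

lemma measure_basic_set_ge_gibbs:
  assumes "gibbs_measure d X f \<psi> \<nu>"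
  shows "\<exists>C>0. \<forall>y\<in>seqs d. \<forall>n. exp (birkhoff n \<psi> y) / C \<le> measure \<nu> (basic_set y n)"
proof -
  interpret prob_space \<nu> using assms by (simp add: gibbs_measure_def)
  obtain C where C: "C \<ge> 1" "\<forall>n. \<forall>w\<in>words d n. \<forall>x\<in>cyl d w.
        exp (birkhoff n \<psi> x) / C \<le> measure \<nu> (coding f X ` cyl d w)"
    using assms unfolding gibbs_measure_def by blast
  have "exp (birkhoff n \<psi> y) / C \<le> measure \<nu> (basic_set y n)" if y: "y \<in> seqs d" for y n
  proof -
    define w where "w = map y [0..<n]"
    have "w \<in> words d n" "y \<in> cyl d w" using y by (auto simp: w_def words_def seqs_def cyl_def)
    then have "exp (birkhoff n \<psi> y) / C \<le> measure \<nu> (coding f X ` cyl d w)" using C(2) by blast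
    also have "\<dots> \<le> measure \<nu> (basic_set y n)"
    proof (rule finite_measure_mono)
      show "coding f X ` cyl d w \<subseteq> basic_set y n"
      proof
        fix u assume "u \<in> coding f X ` cyl d w"
        then obtain z where z: "z \<in> cyl d w" "u = coding f X z" by auto
        have "z \<in> seqs d" using z(1) by (simp add: cyl_def)
        moreover have "\<forall>i<n. z i = y i" using z(1) by (simp add: cyl_def w_def)
        ultimately show "u \<in> basic_set y n"
          using coding_in_basic_set basic_set_cong z(2) by metis
      qed
      show "basic_set y n \<in> sets \<nu>"
        using assms compact_basic_set[OF y] by (simp add: gibbs_measure_def compact_imp_closed)
    qed
    finally show ?thesis .
  qed
  then show ?thesis using C(1) by (intro exI[of _ C]) auto
qed

lemma holder_quotient_exponential_growth:
  assumes hol: "holder_seq d \<psi>" and above: "\<forall>x\<in>seqs d. \<psi> x > \<alpha> * phi f X x"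
    and gibbs: "gibbs_measure d X f \<psi> \<nu>" and "0 < \<alpha>"
  shows "\<exists>\<gamma>>0. \<exists>K c. \<forall>n\<ge>K. \<forall>\<xi>\<in>limit_set f d X. \<exists>\<eta>. \<eta> \<noteq> \<xi> \<and> \<bar>\<eta> - \<xi>\<bar> \<le> 2 * (lam ^ n * (r - l)) \<and>
           exp (real n * \<gamma> - c) \<le> \<bar>distr_fun \<nu> \<xi> - distr_fun \<nu> \<eta>\<bar> / \<bar>\<xi> - \<eta>\<bar> powr \<alpha>"
proof -
  obtain \<gamma> where \<gamma>: "\<gamma> > 0" "\<forall>z\<in>seqs d. \<gamma> \<le> \<psi> z - \<alpha> * phi f X z"
    using ex_uniform_gap[OF hol above] by blast
  define \<epsilon> where "\<epsilon> = \<gamma> / (2 * \<alpha>)"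
  have "0 < \<epsilon>" and \<alpha>\<epsilon>: "\<alpha> * \<epsilon> = \<gamma> / 2" using \<gamma>(1) \<open>0 < \<alpha>\<close> by (auto simp: \<epsilon>_def)
  obtain K c where Kc: "\<forall>y\<in>seqs d. \<forall>n\<ge>K.
      diam_le (basic_set y n) (exp (c + birkhoff n (phi f X) y + real n * \<epsilon>))"
    using diam_le_basic_set_exp_birkhoff[OF \<open>0 < \<epsilon>\<close>] by blast
  obtain C where C: "C > 0" "\<forall>y\<in>seqs d. \<forall>n. exp (birkhoff n \<psi> y) / C \<le> measure \<nu> (basic_set y n)"
    using measure_basic_set_ge_gibbs[OF gibbs] by blast
  have fin: "finite_measure \<nu>" and sets: "sets \<nu> = sets borel"
    using gibbs by (auto simp: gibbs_measure_def prob_space_def)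
  define c1 where "c1 = ln (2 * C) + \<alpha> * (ln 2 + c)"
  have "\<exists>\<eta>. \<eta> \<noteq> \<xi> \<and> \<bar>\<eta> - \<xi>\<bar> \<le> 2 * (lam ^ n * (r - l)) \<and>
      exp (real n * (\<gamma> / 2) - c1) \<le> \<bar>distr_fun \<nu> \<xi> - distr_fun \<nu> \<eta>\<bar> / \<bar>\<xi> - \<eta>\<bar> powr \<alpha>"
    if "K \<le> n" and \<xi>: "\<xi> \<in> limit_set f d X" for n \<xi>
  proof -
    obtain y where y: "y \<in> seqs d" "\<xi> \<in> basic_set y n" using limit_set_in_basic_set[OF \<xi>] by blast
    define \<Phi> where "\<Phi> = birkhoff n (phi f X) y"
    define S where "S = birkhoff n \<psi> y"
    define D where "D = min (exp (c + \<Phi> + real n * \<epsilon>)) (lam ^ n * (r - l))"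
    have "0 < D" using lam_pos l_less_r by (simp add: D_def)
    have diam: "diam_le (basic_set y n) D"
      unfolding D_def \<Phi>_def using Kc y(1) \<open>K \<le> n\<close> diam_le_basic_set[OF y(1)] by (intro diam_le_min) auto
    obtain \<eta> where \<eta>: "\<eta> \<noteq> \<xi>" "\<bar>\<eta> - \<xi>\<bar> \<le> 2 * D"
        "measure \<nu> {\<xi> - D..\<xi> + D} \<le> 2 * \<bar>distr_fun \<nu> \<eta> - distr_fun \<nu> \<xi>\<bar>"
      using distr_fun_oscillation[OF fin sets \<open>0 < D\<close>] by blast
    define Q where "Q = \<bar>distr_fun \<nu> \<xi> - distr_fun \<nu> \<eta>\<bar>"
    have mass: "exp S / (2 * C) \<le> Q"
    proof -
      have "exp S / C \<le> measure \<nu> (basic_set y n)" using C(2) y(1) by (simp add: S_def)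
      also have "\<dots> \<le> measure \<nu> {\<xi> - D..\<xi> + D}"
        using diam_le_subset_Icc[OF diam y(2)] sets by (intro finite_measure.finite_measure_mono[OF fin]) auto
      also have "\<dots> \<le> 2 * Q" using \<eta>(3) by (simp add: Q_def abs_minus_commute)
      finally show ?thesis using C(1) by (simp add: field_simps)
    qed
    have length: "\<bar>\<xi> - \<eta>\<bar> powr \<alpha> \<le> exp (\<alpha> * (ln 2 + c + \<Phi> + real n * \<epsilon>))"
    proof -
      have "\<bar>\<xi> - \<eta>\<bar> powr \<alpha> \<le> (2 * exp (c + \<Phi> + real n * \<epsilon>)) powr \<alpha>"
        using \<eta>(2) \<open>0 < \<alpha>\<close> by (intro powr_mono2) (auto simp: D_def abs_minus_commute)
      also have "\<dots> = exp (\<alpha> * (ln 2 + c + \<Phi> + real n * \<epsilon>))" by (simp add: powr_def ln_mult)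
      finally show ?thesis .
    qed
    have "S - \<alpha> * \<Phi> \<ge> real n * \<gamma>"
      using birkhoff_lower_bound[OF y(1), where g="\<lambda>z. \<psi> z - \<alpha> * phi f X z" and c=\<gamma>] \<gamma>(2)
      by (simp add: birkhoff_diff_scaled S_def \<Phi>_def)
    moreover have "\<alpha> * (ln 2 + c + \<Phi> + real n * \<epsilon>) = \<alpha> * (ln 2 + c) + \<alpha> * \<Phi> + real n * \<gamma> / 2"
      using \<alpha>\<epsilon> by (simp add: distrib_left mult.left_commute)
    ultimately have "exp (real n * (\<gamma> / 2) - c1) \<le> exp (S - ln (2 * C) - \<alpha> * (ln 2 + c + \<Phi> + real n * \<epsilon>))"
      unfolding c1_def by simp
    also have "\<dots> = (exp S / (2 * C)) / exp (\<alpha> * (ln 2 + c + \<Phi> + real n * \<epsilon>))"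
      using C(1) by (simp add: exp_diff)
    also have "\<dots> \<le> Q / \<bar>\<xi> - \<eta>\<bar> powr \<alpha>"
      using mass length \<eta>(1) by (intro frac_le) (auto simp: Q_def)
    finally show ?thesis using \<eta>(1,2) unfolding Q_def D_def by (intro exI[of _ \<eta>]) auto
  qed
  then show ?thesis using \<gamma>(1) by (intro exI[of _ "\<gamma> / 2"] conjI exI[of _ K] exI[of _ c1]) auto
qed

lemma holder_quotient_exceeds:
  assumes hol: "holder_seq d \<psi>" and above: "\<forall>x\<in>seqs d. \<psi> x > \<alpha> * phi f X x"
    and gibbs: "gibbs_measure d X f \<psi> \<nu>" and "0 < \<alpha>" and \<xi>: "\<xi> \<in> limit_set f d X" and "0 < \<delta>"
  shows "\<exists>\<eta>. \<eta> \<noteq> \<xi> \<and> dist \<eta> \<xi> < \<delta> \<and> M \<le> \<bar>distr_fun \<nu> \<xi> - distr_fun \<nu> \<eta>\<bar> / \<bar>\<xi> - \<eta>\<bar> powr \<alpha>"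
proof -
  obtain \<gamma> K c where "\<gamma> > 0" and growth: "\<forall>n\<ge>K. \<forall>\<xi>\<in>limit_set f d X. \<exists>\<eta>. \<eta> \<noteq> \<xi> \<and>
      \<bar>\<eta> - \<xi>\<bar> \<le> 2 * (lam ^ n * (r - l)) \<and>
      exp (real n * \<gamma> - c) \<le> \<bar>distr_fun \<nu> \<xi> - distr_fun \<nu> \<eta>\<bar> / \<bar>\<xi> - \<eta>\<bar> powr \<alpha>"
    using holder_quotient_exponential_growth[OF hol above gibbs \<open>0 < \<alpha>\<close>] by blast
  have "\<forall>\<^sub>F n in sequentially. ln (max M 1) + c \<le> real n * \<gamma>"
  proof -
    obtain N :: nat where "(ln (max M 1) + c) / \<gamma> \<le> real N" using real_arch_simple by blast
    then have "ln (max M 1) + c \<le> real n * \<gamma>" if "N \<le> n" for n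
      using that \<open>\<gamma> > 0\<close> by (smt (verit) pos_divide_le_eq mult_right_mono of_nat_mono)
    then show ?thesis unfolding eventually_sequentially by blast
  qed
  moreover have "(\<lambda>n. lam ^ n * (r - l)) \<longlonglongrightarrow> 0"
    using lam_pos lam_less_1 by (intro tendsto_mult_left_zero LIMSEQ_power_zero) auto
  then have "\<forall>\<^sub>F n in sequentially. lam ^ n * (r - l) < \<delta> / 2"
    using \<open>0 < \<delta>\<close> by (intro order_tendstoD(2)) auto
  ultimately obtain n where n: "K \<le> n" "ln (max M 1) + c \<le> real n * \<gamma>" "lam ^ n * (r - l) < \<delta> / 2"
    using eventually_ge_at_top[of K] by (metis (mono_tags, lifting) eventually_conj eventually_happens' sequentially_bot)
  obtain \<eta> where \<eta>: "\<eta> \<noteq> \<xi>" "\<bar>\<eta> - \<xi>\<bar> \<le> 2 * (lam ^ n * (r - l))"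
      "exp (real n * \<gamma> - c) \<le> \<bar>distr_fun \<nu> \<xi> - distr_fun \<nu> \<eta>\<bar> / \<bar>\<xi> - \<eta>\<bar> powr \<alpha>"
    using growth n(1) \<xi> by blast
  have "M \<le> exp (ln (max M 1))" by simp
  also have "\<dots> \<le> exp (real n * \<gamma> - c)" using n(2) by (simp only: exp_le_cancel_iff)
  finally have "M \<le> \<bar>distr_fun \<nu> \<xi> - distr_fun \<nu> \<eta>\<bar> / \<bar>\<xi> - \<eta>\<bar> powr \<alpha>" using \<eta>(3) by linarith
  moreover have "dist \<eta> \<xi> < \<delta>" using \<eta>(2) n(3) by (simp add: dist_real_def)
  ultimately show ?thesis using \<eta>(1) by blast
qed

end

theorem lemma2p2:
  fixes d :: nat and X :: "real set" and f :: "nat \<Rightarrow> real \<Rightarrow> real"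
    and \<psi> :: "(nat \<Rightarrow> nat) \<Rightarrow> real" and \<nu> :: "real measure" and \<alpha> :: real
  assumes setting: "ifs_setting d X f"
    and hol: "holder_seq d \<psi>"
    and neg: "\<forall>x\<in>seqs d. \<psi> x < 0"
    and press: "has_pressure d \<psi> 0"
    and above: "\<forall>x\<in>seqs d. \<psi> x > \<alpha> * phi f X x"
    and gibbs: "gibbs_measure d X f \<psi> \<nu>"
    and alpha_pos: "\<alpha> > 0"
    and xi: "\<xi> \<in> L_star f d X"
  shows "Limsup (at \<xi>)
           (\<lambda>\<eta>. ereal (\<bar>distr_fun \<nu> \<xi> - distr_fun \<nu> \<eta>\<bar> / \<bar>\<xi> - \<eta>\<bar> powr \<alpha>)) = \<infinity>"
proof -
  have \<xi>: "\<xi> \<in> limit_set f d X" using xi by (simp add: L_star_def)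
  then have "\<xi> \<in> (\<Union>w\<in>words d 0. comp_word f w ` X)" unfolding limit_set_def by blast
  then have "\<xi> \<in> X" by (simp add: words_def)
  then obtain l r where "X = {l..r}" "l < r" using ifs_setting_interval[OF setting] by blast
  then interpret ifs_interval d X f l r using setting by unfold_locales
  show ?thesis
    using holder_quotient_exceeds[OF hol above gibbs alpha_pos \<xi>] by (intro Limsup_at_eq_infinityI)
qed

end
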